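(* Assume $M$ is projective in $\sigma[M]$ and $M$ is an Artinian $R$-module. Then either $P(M)=M$, or there exist finitely many primitive $M$-ideals $P_1,\dots,P_n$ of $M$ with $P(M)=\bigcap_{i=1}^n P_i$.
   Context: $R$ is a ring with identity, modules are unital left $R$-modules, $M$ is a fixed left $R$-module; $\sigma[M]$ is the full subcategory of $R$-modules isomorphic to submodules of $M$-generated modules. $\mathrm{Ann}_M(X):=\bigcap_{f\in\mathrm{Hom}_R(M,X)}\ker f$. A submodule $N\le M$ is an $M$-ideal if $N$ is the intersection of the kernels of all homomorphisms from $M$ into modules of some class $\mathcal C$. For $N\le M$ and a module $X$, $N\cdot X$ is the intersection of the kernels of all homomorphisms $X\to W$ where $W$ ranges over modules with $f(N)=0$ for all $f\in\mathrm{Hom}_R(M,W)$ (for $Y\le X$, $N\cdot Y$ is formed regarding $Y$ as a module). A module $X\ne0$ is $M$-prime if for all $N\le M$, $Y\le X$, $N\cdot Y=0$ implies $N\cdot X=0$ or $Y=0$. A proper $M$-ideal $P$ is a prime $M$-ideal if $P=\mathrm{Ann}_M(X)$ for some $M$-prime module $X$. An $M$-ideal $P$ is primitive if $P=\mathrm{Ann}_M(S)$ for some simple module $S$. $P(M)$ is the intersection of all prime $M$-ideals of $M$ ($P(M)=M$ if there are none). *)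

theory Defs
  imports "HOL-Algebra.Module"
begin

text \<open>Unital left modules over a (not necessarily commutative) ring with identity.
  The record type of HOL-Algebra is reused; its multiplicative fields are ignored.\<close>

definition lmodule :: "'r ring \<Rightarrow> ('r, 'a) module \<Rightarrow> bool" where
  "lmodule R M \<longleftrightarrow> ring R \<and> abelian_group M \<and>
     (\<forall>a\<in>carrier R. \<forall>x\<in>carrier M. a \<odot>\<^bsub>M\<^esub> x \<in> carrier M) \<and>
     (\<forall>a\<in>carrier R. \<forall>b\<in>carrier R. \<forall>x\<in>carrier M.
        (a \<oplus>\<^bsub>R\<^esub> b) \<odot>\<^bsub>M\<^esub> x = a \<odot>\<^bsub>M\<^esub> x \<oplus>\<^bsub>M\<^esub> b \<odot>\<^bsub>M\<^esub> x) \<and>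
     (\<forall>a\<in>carrier R. \<forall>x\<in>carrier M. \<forall>y\<in>carrier M.
        a \<odot>\<^bsub>M\<^esub> (x \<oplus>\<^bsub>M\<^esub> y) = a \<odot>\<^bsub>M\<^esub> x \<oplus>\<^bsub>M\<^esub> a \<odot>\<^bsub>M\<^esub> y) \<and>
     (\<forall>a\<in>carrier R. \<forall>b\<in>carrier R. \<forall>x\<in>carrier M.
        (a \<otimes>\<^bsub>R\<^esub> b) \<odot>\<^bsub>M\<^esub> x = a \<odot>\<^bsub>M\<^esub> (b \<odot>\<^bsub>M\<^esub> x)) \<and>
     (\<forall>x\<in>carrier M. \<one>\<^bsub>R\<^esub> \<odot>\<^bsub>M\<^esub> x = x)"

definition submodule :: "'r ring \<Rightarrow> ('r, 'a) module \<Rightarrow> 'a set \<Rightarrow> bool" where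
  "submodule R M N \<longleftrightarrow> N \<subseteq> carrier M \<and> \<zero>\<^bsub>M\<^esub> \<in> N \<and>
     (\<forall>x\<in>N. \<forall>y\<in>N. x \<oplus>\<^bsub>M\<^esub> y \<in> N) \<and>
     (\<forall>a\<in>carrier R. \<forall>x\<in>N. a \<odot>\<^bsub>M\<^esub> x \<in> N)"

definition submod :: "('r, 'a) module \<Rightarrow> 'a set \<Rightarrow> ('r, 'a) module" where
  "submod M N = M\<lparr>carrier := N\<rparr>"

definition mod_hom :: "'r ring \<Rightarrow> ('r, 'a) module \<Rightarrow> ('r, 'b) module \<Rightarrow> ('a \<Rightarrow> 'b) \<Rightarrow> bool" where
  "mod_hom R X W f \<longleftrightarrow> f \<in> carrier X \<rightarrow> carrier W \<and>
     (\<forall>x\<in>carrier X. \<forall>y\<in>carrier X. f (x \<oplus>\<^bsub>X\<^esub> y) = f x \<oplus>\<^bsub>W\<^esub> f y) \<and>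
     (\<forall>a\<in>carrier R. \<forall>x\<in>carrier X. f (a \<odot>\<^bsub>X\<^esub> x) = a \<odot>\<^bsub>W\<^esub> f x)"

definition simple_mod :: "'r ring \<Rightarrow> ('r, 'a) module \<Rightarrow> bool" where
  "simple_mod R S \<longleftrightarrow> lmodule R S \<and> carrier S \<noteq> {\<zero>\<^bsub>S\<^esub>} \<and>
     (\<forall>N. submodule R S N \<longrightarrow> N = {\<zero>\<^bsub>S\<^esub>} \<or> N = carrier S)"

definition artinian :: "'r ring \<Rightarrow> ('r, 'a) module \<Rightarrow> bool" where
  "artinian R M \<longleftrightarrow> (\<forall>C :: nat \<Rightarrow> 'a set. (\<forall>n. submodule R M (C n)) \<longrightarrow>
     (\<forall>n. C (Suc n) \<subseteq> C n) \<longrightarrow> (\<exists>n. \<forall>m\<ge>n. C m = C n))"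

definition Ann :: "'r ring \<Rightarrow> ('r, 'a) module \<Rightarrow> ('r, 'x) module \<Rightarrow> 'a set" where
  "Ann R M X = {m \<in> carrier M. \<forall>f. mod_hom R M X f \<longrightarrow> f m = \<zero>\<^bsub>X\<^esub>}"

definition gen_submod :: "'r ring \<Rightarrow> ('r, 'b) module \<Rightarrow> 'b set \<Rightarrow> 'b set" where
  "gen_submod R W S = \<Inter>{N. submodule R W N \<and> S \<subseteq> N}"

definition M_generated :: "'r ring \<Rightarrow> ('r, 'a) module \<Rightarrow> ('r, 'b) module \<Rightarrow> bool" where
  "M_generated R M W \<longleftrightarrow>
     carrier W = gen_submod R W (\<Union>{f ` carrier M | f. mod_hom R M W f})"

text \<open>X belongs to sigma[M]: X is isomorphic to a submodule of an M-generated module.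
  (Such a module can always be chosen of cardinality at most |X|*|M|*aleph_0,
  hence on the carrier type nat * 'x * 'a.)\<close>
definition in_sigma :: "'r ring \<Rightarrow> ('r, 'a) module \<Rightarrow> ('r, 'x) module \<Rightarrow> bool" where
  "in_sigma R M X \<longleftrightarrow> lmodule R X \<and>
     (\<exists>(W :: ('r, nat \<times> 'x \<times> 'a) module) i. lmodule R W \<and> M_generated R M W \<and>
        mod_hom R X W i \<and> inj_on i (carrier X))"

text \<open>M is projective in sigma[M] (test modules taken on the carrier type 'a set,
  i.e. all modules of sigma[M] of cardinality at most 2^|'a|, up to isomorphism).\<close>
definition proj_in_sigma :: "'r ring \<Rightarrow> ('r, 'a) module \<Rightarrow> bool" where
  "proj_in_sigma R M \<longleftrightarrow> in_sigma R M M \<and>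
     (\<forall>(N :: ('r, 'a set) module) (L :: ('r, 'a set) module) g f.
        in_sigma R M N \<and> in_sigma R M L \<and> mod_hom R N L g \<and> g ` carrier N = carrier L \<and>
        mod_hom R M L f \<longrightarrow>
        (\<exists>h. mod_hom R M N h \<and> (\<forall>x\<in>carrier M. g (h x) = f x)))"

text \<open>N . X : intersection of kernels of all X -> W with f(N)=0 for all f : M -> W.
  It suffices to let W range over modules on the carrier type 'x set
  (every kernel arises from a quotient of X).\<close>
definition prod_M :: "'r ring \<Rightarrow> ('r, 'a) module \<Rightarrow> 'a set \<Rightarrow> ('r, 'x) module \<Rightarrow> 'x set" where
  "prod_M R M N X = {x \<in> carrier X. \<forall>(W :: ('r, 'x set) module) f.
      lmodule R W \<and> (\<forall>g. mod_hom R M W g \<longrightarrow> (\<forall>n\<in>N. g n = \<zero>\<^bsub>W\<^esub>)) \<and> mod_hom R X W f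
      \<longrightarrow> f x = \<zero>\<^bsub>W\<^esub>}"

text \<open>M-ideal: intersection of Ann_M over some class of modules (quotients of M,
  carrier type 'a set, suffice).\<close>
definition M_ideal :: "'r ring \<Rightarrow> ('r, 'a) module \<Rightarrow> 'a set \<Rightarrow> bool" where
  "M_ideal R M N \<longleftrightarrow> (\<exists>\<C> :: ('r, 'a set) module set. (\<forall>W\<in>\<C>. lmodule R W) \<and>
     N = carrier M \<inter> \<Inter>{Ann R M W | W. W \<in> \<C>})"

definition M_prime :: "'r ring \<Rightarrow> ('r, 'a) module \<Rightarrow> ('r, 'x) module \<Rightarrow> bool" where
  "M_prime R M X \<longleftrightarrow> lmodule R X \<and> carrier X \<noteq> {\<zero>\<^bsub>X\<^esub>} \<and>
     (\<forall>N Y. submodule R M N \<longrightarrow> submodule R X Y \<longrightarrow>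
        prod_M R M N (submod X Y) = {\<zero>\<^bsub>X\<^esub>} \<longrightarrow>
        prod_M R M N X = {\<zero>\<^bsub>X\<^esub>} \<or> Y = {\<zero>\<^bsub>X\<^esub>})"

text \<open>Prime M-ideal. The M-prime module may be taken cyclic, i.e. isomorphic to some R/I,
  hence on the carrier type 'r set.\<close>
definition prime_M_ideal :: "'r ring \<Rightarrow> ('r, 'a) module \<Rightarrow> 'a set \<Rightarrow> bool" where
  "prime_M_ideal R M P \<longleftrightarrow> M_ideal R M P \<and> P \<noteq> carrier M \<and>
     (\<exists>X :: ('r, 'r set) module. M_prime R M X \<and> P = Ann R M X)"

text \<open>Primitive M-ideal: annihilator of a simple module (every simple module is
  isomorphic to some R/m, hence carrier type 'r set).\<close>
definition primitive_M_ideal :: "'r ring \<Rightarrow> ('r, 'a) module \<Rightarrow> 'a set \<Rightarrow> bool" where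
  "primitive_M_ideal R M P \<longleftrightarrow> M_ideal R M P \<and>
     (\<exists>S :: ('r, 'r set) module. simple_mod R S \<and> P = Ann R M S)"

definition prime_radical :: "'r ring \<Rightarrow> ('r, 'a) module \<Rightarrow> 'a set" where
  "prime_radical R M = carrier M \<inter> \<Inter>{P. prime_M_ideal R M P}"

end

theory Submission
  imports Defs
begin

text \<open>Over an Artinian \<open>M\<close>, a prime \<open>M\<close>-ideal \<open>P = Ann\<^sub>M(X)\<close>
  is primitive: take \<open>K\<close> minimal among the submodules of \<open>M\<close> not contained in \<open>P\<close> and
  \<open>f : M \<rightarrow> X\<close> with \<open>f(K) \<noteq> 0\<close>; minimality makes \<open>f(K)\<close> simple, and \<open>M\<close>-primeness of \<open>X\<close> gives
  \<open>Ann\<^sub>M(f(K)) = Ann\<^sub>M(X) = P\<close>. Moreover the descending chain condition forces the intersection of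
  all prime \<open>M\<close>-ideals to agree with one of its finite subintersections.\<close>

lemma lmoduleD:
  assumes "lmodule R M"
  shows "ring R" "abelian_group M"
    "\<And>a x. a \<in> carrier R \<Longrightarrow> x \<in> carrier M \<Longrightarrow> a \<odot>\<^bsub>M\<^esub> x \<in> carrier M"
    "\<And>a b x. a \<in> carrier R \<Longrightarrow> b \<in> carrier R \<Longrightarrow> x \<in> carrier M \<Longrightarrow>
        (a \<oplus>\<^bsub>R\<^esub> b) \<odot>\<^bsub>M\<^esub> x = a \<odot>\<^bsub>M\<^esub> x \<oplus>\<^bsub>M\<^esub> b \<odot>\<^bsub>M\<^esub> x"
    "\<And>a x y. a \<in> carrier R \<Longrightarrow> x \<in> carrier M \<Longrightarrow> y \<in> carrier M \<Longrightarrow>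
        a \<odot>\<^bsub>M\<^esub> (x \<oplus>\<^bsub>M\<^esub> y) = a \<odot>\<^bsub>M\<^esub> x \<oplus>\<^bsub>M\<^esub> a \<odot>\<^bsub>M\<^esub> y"
    "\<And>a b x. a \<in> carrier R \<Longrightarrow> b \<in> carrier R \<Longrightarrow> x \<in> carrier M \<Longrightarrow>
        (a \<otimes>\<^bsub>R\<^esub> b) \<odot>\<^bsub>M\<^esub> x = a \<odot>\<^bsub>M\<^esub> (b \<odot>\<^bsub>M\<^esub> x)"
    "\<And>x. x \<in> carrier M \<Longrightarrow> \<one>\<^bsub>R\<^esub> \<odot>\<^bsub>M\<^esub> x = x"
  using assms unfolding lmodule_def by auto

lemma mod_homD:
  assumes "mod_hom R X W f"
  shows "\<And>x. x \<in> carrier X \<Longrightarrow> f x \<in> carrier W"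
    "\<And>x y. x \<in> carrier X \<Longrightarrow> y \<in> carrier X \<Longrightarrow> f (x \<oplus>\<^bsub>X\<^esub> y) = f x \<oplus>\<^bsub>W\<^esub> f y"
    "\<And>a x. a \<in> carrier R \<Longrightarrow> x \<in> carrier X \<Longrightarrow> f (a \<odot>\<^bsub>X\<^esub> x) = a \<odot>\<^bsub>W\<^esub> f x"
  using assms unfolding mod_hom_def by auto

lemma mod_hom_comp:
  assumes "mod_hom R A B g" "mod_hom R B C f"
  shows "mod_hom R A C (f \<circ> g)"
  using mod_homD[OF assms(1)] mod_homD[OF assms(2)] unfolding mod_hom_def by (auto simp: Pi_def)

lemma submoduleD:
  assumes "submodule R M N"
  shows "N \<subseteq> carrier M" "\<zero>\<^bsub>M\<^esub> \<in> N"
    "\<And>x y. x \<in> N \<Longrightarrow> y \<in> N \<Longrightarrow> x \<oplus>\<^bsub>M\<^esub> y \<in> N"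
    "\<And>a x. a \<in> carrier R \<Longrightarrow> x \<in> N \<Longrightarrow> a \<odot>\<^bsub>M\<^esub> x \<in> N"
  using assms unfolding submodule_def by auto

lemma abelian_group_add_idem_imp_zero:
  assumes "abelian_group G" "x \<in> carrier G" "x \<oplus>\<^bsub>G\<^esub> x = x"
  shows "x = \<zero>\<^bsub>G\<^esub>"
proof -
  interpret abelian_group G by fact
  show ?thesis using assms(2,3) by (metis add.l_cancel_one)
qed

lemma lmodule_smult_zero:
  assumes M: "lmodule R M" and a: "a \<in> carrier R"
  shows "a \<odot>\<^bsub>M\<^esub> \<zero>\<^bsub>M\<^esub> = \<zero>\<^bsub>M\<^esub>"
proof -
  interpret abelian_group M using lmoduleD(2)[OF M] .
  have "a \<odot>\<^bsub>M\<^esub> \<zero>\<^bsub>M\<^esub> \<oplus>\<^bsub>M\<^esub> a \<odot>\<^bsub>M\<^esub> \<zero>\<^bsub>M\<^esub> = a \<odot>\<^bsub>M\<^esub> \<zero>\<^bsub>M\<^esub>"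
    using lmoduleD(5)[OF M a zero_closed zero_closed] by simp
  then show ?thesis
    by (rule abelian_group_add_idem_imp_zero[OF lmoduleD(2)[OF M] lmoduleD(3)[OF M a zero_closed]])
qed

lemma lmodule_zero_smult:
  assumes M: "lmodule R M" and x: "x \<in> carrier M"
  shows "\<zero>\<^bsub>R\<^esub> \<odot>\<^bsub>M\<^esub> x = \<zero>\<^bsub>M\<^esub>"
proof -
  interpret ring R using lmoduleD(1)[OF M] .
  have "\<zero>\<^bsub>R\<^esub> \<odot>\<^bsub>M\<^esub> x \<oplus>\<^bsub>M\<^esub> \<zero>\<^bsub>R\<^esub> \<odot>\<^bsub>M\<^esub> x = \<zero>\<^bsub>R\<^esub> \<odot>\<^bsub>M\<^esub> x"
    using lmoduleD(4)[OF M zero_closed zero_closed x] by simp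
  then show ?thesis
    by (rule abelian_group_add_idem_imp_zero[OF lmoduleD(2)[OF M] lmoduleD(3)[OF M zero_closed x]])
qed

lemma mod_hom_zero:
  assumes X: "lmodule R X" and W: "lmodule R W" and f: "mod_hom R X W f"
  shows "f \<zero>\<^bsub>X\<^esub> = \<zero>\<^bsub>W\<^esub>"
proof -
  interpret abelian_group X using lmoduleD(2)[OF X] .
  have "f \<zero>\<^bsub>X\<^esub> \<oplus>\<^bsub>W\<^esub> f \<zero>\<^bsub>X\<^esub> = f \<zero>\<^bsub>X\<^esub>"
    using mod_homD(2)[OF f zero_closed zero_closed] by simp
  then show ?thesis
    by (rule abelian_group_add_idem_imp_zero[OF lmoduleD(2)[OF W] mod_homD(1)[OF f zero_closed]])
qed

subsection \<open>Submodules\<close>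

lemma submodule_carrier:
  assumes M: "lmodule R M"
  shows "submodule R M (carrier M)"
proof -
  interpret abelian_group M using lmoduleD(2)[OF M] .
  show ?thesis unfolding submodule_def using lmoduleD(3)[OF M] by simp
qed

lemma submodule_Inter:
  assumes F: "F \<noteq> {}" and sub: "\<And>N. N \<in> F \<Longrightarrow> submodule R M N"
  shows "submodule R M (\<Inter>F)"
proof -
  obtain N0 where "N0 \<in> F" using F by blast
  then have "\<Inter>F \<subseteq> carrier M" using submoduleD(1)[OF sub] by blast
  moreover have "\<zero>\<^bsub>M\<^esub> \<in> \<Inter>F" using submoduleD(2)[OF sub] by blast
  moreover have "x \<oplus>\<^bsub>M\<^esub> y \<in> \<Inter>F" if "x \<in> \<Inter>F" "y \<in> \<Inter>F" for x y
    using that submoduleD(3)[OF sub] by blast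
  moreover have "a \<odot>\<^bsub>M\<^esub> x \<in> \<Inter>F" if "a \<in> carrier R" "x \<in> \<Inter>F" for a x
    using that submoduleD(4)[OF sub] by blast
  ultimately show ?thesis unfolding submodule_def by blast
qed

lemma submodule_image:
  assumes M: "lmodule R M" and X: "lmodule R X" and f: "mod_hom R M X f" and K: "submodule R M K"
  shows "submodule R X (f ` K)"
  unfolding submodule_def
proof (intro conjI ballI)
  show "f ` K \<subseteq> carrier X" using mod_homD(1)[OF f] submoduleD(1)[OF K] by blast
  show "\<zero>\<^bsub>X\<^esub> \<in> f ` K" using mod_hom_zero[OF M X f] submoduleD(2)[OF K] by (metis imageI)
next
  fix u v assume "u \<in> f ` K" "v \<in> f ` K"
  then obtain x y where "x \<in> K" "y \<in> K" "u = f x" "v = f y" by blast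
  then show "u \<oplus>\<^bsub>X\<^esub> v \<in> f ` K"
    using mod_homD(2)[OF f, of x y] submoduleD(1,3)[OF K] by (metis image_eqI subsetD)
next
  fix a u assume "a \<in> carrier R" "u \<in> f ` K"
  then obtain x where "x \<in> K" "u = f x" by blast
  then show "a \<odot>\<^bsub>X\<^esub> u \<in> f ` K"
    using \<open>a \<in> carrier R\<close> mod_homD(3)[OF f, of a x] submoduleD(1,4)[OF K] by (metis image_eqI subsetD)
qed

lemma submodule_Int_vimage:
  assumes M: "lmodule R M" and X: "lmodule R X" and f: "mod_hom R M X f"
    and K: "submodule R M K" and N: "submodule R X N"
  shows "submodule R M (K \<inter> f -` N)"
  unfolding submodule_def
proof (intro conjI ballI)
  show "K \<inter> f -` N \<subseteq> carrier M" using submoduleD(1)[OF K] by blast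
  show "\<zero>\<^bsub>M\<^esub> \<in> K \<inter> f -` N"
    using submoduleD(2)[OF K] submoduleD(2)[OF N] mod_hom_zero[OF M X f] by simp
next
  fix x y assume xy: "x \<in> K \<inter> f -` N" "y \<in> K \<inter> f -` N"
  then have "f (x \<oplus>\<^bsub>M\<^esub> y) = f x \<oplus>\<^bsub>X\<^esub> f y"
    using mod_homD(2)[OF f] submoduleD(1)[OF K] by blast
  then show "x \<oplus>\<^bsub>M\<^esub> y \<in> K \<inter> f -` N"
    using xy submoduleD(3)[OF K] submoduleD(3)[OF N] by auto
next
  fix a x assume a: "a \<in> carrier R" and x: "x \<in> K \<inter> f -` N"
  then have "f (a \<odot>\<^bsub>M\<^esub> x) = a \<odot>\<^bsub>X\<^esub> f x"
    using mod_homD(3)[OF f] submoduleD(1)[OF K] by blast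
  then show "a \<odot>\<^bsub>M\<^esub> x \<in> K \<inter> f -` N"
    using a x submoduleD(4)[OF K] submoduleD(4)[OF N] by auto
qed

lemma submod_simps [simp]:
  "carrier (submod X Y) = Y" "\<zero>\<^bsub>submod X Y\<^esub> = \<zero>\<^bsub>X\<^esub>"
  "a \<oplus>\<^bsub>submod X Y\<^esub> b = a \<oplus>\<^bsub>X\<^esub> b" "c \<odot>\<^bsub>submod X Y\<^esub> b = c \<odot>\<^bsub>X\<^esub> b"
  by (simp_all add: submod_def)

lemma lmodule_submod:
  assumes X: "lmodule R X" and Y: "submodule R X Y"
  shows "lmodule R (submod X Y)"
proof -
  interpret X: abelian_group X using lmoduleD(2)[OF X] .
  interpret R: ring R using lmoduleD(1)[OF X] .
  note YX = submoduleD(1)[OF Y]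
  have "abelian_group (submod X Y)"
  proof (rule abelian_groupI)
    fix x assume xY: "x \<in> carrier (submod X Y)"
    then have x: "x \<in> carrier X" using YX by auto
    \<comment> \<open>the additive inverse of \<open>x\<close> is \<open>(\<ominus>\<one>) \<odot> x\<close>, which stays in \<open>Y\<close>\<close>
    have "(\<ominus>\<^bsub>R\<^esub> \<one>\<^bsub>R\<^esub>) \<odot>\<^bsub>X\<^esub> x \<oplus>\<^bsub>X\<^esub> x = (\<ominus>\<^bsub>R\<^esub> \<one>\<^bsub>R\<^esub> \<oplus>\<^bsub>R\<^esub> \<one>\<^bsub>R\<^esub>) \<odot>\<^bsub>X\<^esub> x"
      using lmoduleD(4)[OF X _ R.one_closed x] lmoduleD(7)[OF X x] by simp
    also have "\<dots> = \<zero>\<^bsub>X\<^esub>" using lmodule_zero_smult[OF X x] by (simp add: R.l_neg)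
    finally show "\<exists>y\<in>carrier (submod X Y). y \<oplus>\<^bsub>submod X Y\<^esub> x = \<zero>\<^bsub>submod X Y\<^esub>"
      using submoduleD(4)[OF Y _] xY by auto
  qed (use YX submoduleD(2,3)[OF Y] in \<open>auto simp: X.a_ac subsetD\<close>)
  then show ?thesis
    unfolding lmodule_def using lmoduleD[OF X] YX submoduleD(4)[OF Y] by (auto simp: subsetD)
qed

lemma mod_hom_submod_imp_mod_hom:
  assumes "mod_hom R M (submod X Y) g" "Y \<subseteq> carrier X"
  shows "mod_hom R M X g"
  using assms unfolding mod_hom_def by (auto simp: Pi_def)

subsection \<open>Annihilators\<close>

lemma Ann_subset_carrier: "Ann R M X \<subseteq> carrier M"
  by (auto simp: Ann_def)

lemma submodule_Ann:
  assumes M: "lmodule R M" and X: "lmodule R X"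
  shows "submodule R M (Ann R M X)"
proof -
  interpret M: abelian_group M using lmoduleD(2)[OF M] .
  interpret X: abelian_group X using lmoduleD(2)[OF X] .
  have "\<zero>\<^bsub>M\<^esub> \<in> Ann R M X" unfolding Ann_def using mod_hom_zero[OF M X] by simp
  moreover have "x \<oplus>\<^bsub>M\<^esub> y \<in> Ann R M X" if x: "x \<in> Ann R M X" and y: "y \<in> Ann R M X" for x y
  proof -
    have "f (x \<oplus>\<^bsub>M\<^esub> y) = \<zero>\<^bsub>X\<^esub>" if f: "mod_hom R M X f" for f
    proof -
      have "f x = \<zero>\<^bsub>X\<^esub>" "f y = \<zero>\<^bsub>X\<^esub>" "x \<in> carrier M" "y \<in> carrier M"
        using x y f unfolding Ann_def by auto
      then show ?thesis using mod_homD(2)[OF f] by simp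
    qed
    then show ?thesis using x y unfolding Ann_def by auto
  qed
  moreover have "a \<odot>\<^bsub>M\<^esub> x \<in> Ann R M X" if a: "a \<in> carrier R" and x: "x \<in> Ann R M X" for a x
  proof -
    have "f (a \<odot>\<^bsub>M\<^esub> x) = \<zero>\<^bsub>X\<^esub>" if f: "mod_hom R M X f" for f
    proof -
      have "f x = \<zero>\<^bsub>X\<^esub>" "x \<in> carrier M" using x f unfolding Ann_def by auto
      then show ?thesis using mod_homD(3)[OF f a] lmodule_smult_zero[OF X a] by simp
    qed
    then show ?thesis using a x lmoduleD(3)[OF M] unfolding Ann_def by auto
  qed
  ultimately show ?thesis unfolding submodule_def using Ann_subset_carrier[of R M X] by blast
qed

lemma Ann_submod_supset:
  assumes "Y \<subseteq> carrier X"
  shows "Ann R M X \<subseteq> Ann R M (submod X Y)"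
  using mod_hom_submod_imp_mod_hom[OF _ assms] by (auto simp: Ann_def)

text \<open>\<open>prod_M\<close> only tests modules on the carrier type \<open>'x set\<close>; a module on \<open>'x\<close> is transported
  there along \<open>z \<mapsto> {z}\<close>.\<close>

definition sing_mod :: "('r, 'x) module \<Rightarrow> ('r, 'x set) module" where
  "sing_mod Z = \<lparr>carrier = (\<lambda>z. {z}) ` carrier Z,
     mult = (\<lambda>A B. {the_elem A \<otimes>\<^bsub>Z\<^esub> the_elem B}), one = {\<one>\<^bsub>Z\<^esub>},
     zero = {\<zero>\<^bsub>Z\<^esub>}, add = (\<lambda>A B. {the_elem A \<oplus>\<^bsub>Z\<^esub> the_elem B}),
     smult = (\<lambda>a A. {a \<odot>\<^bsub>Z\<^esub> the_elem A})\<rparr>"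

lemma sing_mod_simps [simp]:
  "carrier (sing_mod Z) = (\<lambda>z. {z}) ` carrier Z"
  "\<zero>\<^bsub>sing_mod Z\<^esub> = {\<zero>\<^bsub>Z\<^esub>}"
  "A \<oplus>\<^bsub>sing_mod Z\<^esub> B = {the_elem A \<oplus>\<^bsub>Z\<^esub> the_elem B}"
  "a \<odot>\<^bsub>sing_mod Z\<^esub> A = {a \<odot>\<^bsub>Z\<^esub> the_elem A}"
  by (simp_all add: sing_mod_def)

lemma lmodule_sing_mod:
  assumes Z: "lmodule R Z"
  shows "lmodule R (sing_mod Z)"
proof -
  interpret Z: abelian_group Z using lmoduleD(2)[OF Z] .
  have "abelian_group (sing_mod Z)"
  proof (rule abelian_groupI)
    fix x assume "x \<in> carrier (sing_mod Z)"
    then obtain z where z: "z \<in> carrier Z" "x = {z}" by auto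
    then have "{\<ominus>\<^bsub>Z\<^esub> z} \<in> carrier (sing_mod Z)" "{\<ominus>\<^bsub>Z\<^esub> z} \<oplus>\<^bsub>sing_mod Z\<^esub> x = \<zero>\<^bsub>sing_mod Z\<^esub>"
      by (auto simp: Z.l_neg)
    then show "\<exists>y\<in>carrier (sing_mod Z). y \<oplus>\<^bsub>sing_mod Z\<^esub> x = \<zero>\<^bsub>sing_mod Z\<^esub>" by blast
  qed (auto simp: Z.a_ac)
  then show ?thesis unfolding lmodule_def using lmoduleD[OF Z] by auto
qed

lemma mod_hom_singleton: "mod_hom R Z (sing_mod Z) (\<lambda>z. {z})"
  unfolding mod_hom_def by auto

lemma mod_hom_the_elem:
  assumes g: "mod_hom R M (sing_mod Z) g"
  shows "mod_hom R M Z (\<lambda>m. the_elem (g m))"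
proof -
  have "\<And>x. x \<in> carrier M \<Longrightarrow> \<exists>z\<in>carrier Z. g x = {z}"
    using mod_homD(1)[OF g] by auto
  then show ?thesis unfolding mod_hom_def using mod_homD(2,3)[OF g] by fastforce
qed

lemma prod_M_eq_zero_if_subset_Ann:
  assumes M: "lmodule R M" and Z: "lmodule R Z" and N: "N \<subseteq> Ann R M Z"
  shows "prod_M R M N Z = {\<zero>\<^bsub>Z\<^esub>}"
proof
  show "{\<zero>\<^bsub>Z\<^esub>} \<subseteq> prod_M R M N Z"
    unfolding prod_M_def
    using abelian_group.axioms(1)[OF lmoduleD(2)[OF Z], THEN abelian_monoid.zero_closed] mod_hom_zero[OF Z]
    by auto
next
  have "g n = \<zero>\<^bsub>sing_mod Z\<^esub>" if g: "mod_hom R M (sing_mod Z) g" and n: "n \<in> N" for g n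
  proof -
    have "n \<in> Ann R M Z" using n N by blast
    then have "the_elem (g n) = \<zero>\<^bsub>Z\<^esub>" and "n \<in> carrier M"
      using mod_hom_the_elem[OF g] by (auto simp: Ann_def)
    then show ?thesis using mod_homD(1)[OF g] by force
  qed
  then show "prod_M R M N Z \<subseteq> {\<zero>\<^bsub>Z\<^esub>}"
    using lmodule_sing_mod[OF Z] mod_hom_singleton[of R Z] unfolding prod_M_def by fastforce
qed

lemma subset_Ann_if_prod_M_eq_zero:
  assumes N: "N \<subseteq> carrier M" and p: "prod_M R M N X = {\<zero>\<^bsub>X\<^esub>}"
  shows "N \<subseteq> Ann R M X"
proof
  fix n assume n: "n \<in> N"
  have "g n \<in> prod_M R M N X" if g: "mod_hom R M X g" for g
    unfolding prod_M_def using mod_homD(1)[OF g] n N mod_hom_comp[OF g] by fastforce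
  then show "n \<in> Ann R M X" using n N p by (auto simp: Ann_def)
qed

lemma M_primeD:
  assumes "M_prime R M X"
  shows "lmodule R X"
    and "\<And>N Y. submodule R M N \<Longrightarrow> submodule R X Y \<Longrightarrow> Y \<noteq> {\<zero>\<^bsub>X\<^esub>} \<Longrightarrow>
      prod_M R M N (submod X Y) = {\<zero>\<^bsub>X\<^esub>} \<Longrightarrow> prod_M R M N X = {\<zero>\<^bsub>X\<^esub>}"
  using assms unfolding M_prime_def by blast+

lemma M_prime_Ann_submod:
  assumes M: "lmodule R M" and X: "M_prime R M X"
    and Y: "submodule R X Y" and Y0: "Y \<noteq> {\<zero>\<^bsub>X\<^esub>}"
  shows "Ann R M (submod X Y) = Ann R M X"
proof
  define S where "S = submod X Y"
  have S: "lmodule R S" unfolding S_def using lmodule_submod[OF M_primeD(1)[OF X] Y] .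
  have "prod_M R M (Ann R M S) S = {\<zero>\<^bsub>X\<^esub>}"
    using prod_M_eq_zero_if_subset_Ann[OF M S] by (simp add: S_def)
  then have "prod_M R M (Ann R M S) X = {\<zero>\<^bsub>X\<^esub>}"
    using M_primeD(2)[OF X submodule_Ann[OF M S] Y Y0] by (simp add: S_def)
  then show "Ann R M S \<subseteq> Ann R M X"
    by (rule subset_Ann_if_prod_M_eq_zero[OF Ann_subset_carrier])
qed (rule Ann_submod_supset[OF submoduleD(1)[OF Y]])

subsection \<open>Artinian modules\<close>

lemma artinian_has_minimal:
  assumes art: "artinian R M" and ne: "A \<noteq> {}" and sub: "\<And>K. K \<in> A \<Longrightarrow> submodule R M K"
  shows "\<exists>K\<in>A. \<forall>K'\<in>A. K' \<subseteq> K \<longrightarrow> K' = K"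
proof (rule ccontr)
  assume "\<not> ?thesis"
  then have smaller: "\<And>K. K \<in> A \<Longrightarrow> \<exists>K'. K' \<in> A \<and> K' \<subset> K" by blast
  define nxt where "nxt K = (SOME K'. K' \<in> A \<and> K' \<subset> K)" for K
  have nxt: "nxt K \<in> A \<and> nxt K \<subset> K" if "K \<in> A" for K
    unfolding nxt_def using someI_ex[OF smaller[OF that]] .
  obtain K0 where K0: "K0 \<in> A" using ne by blast
  define C where "C n = (nxt ^^ n) K0" for n
  have CA: "C n \<in> A" for n by (induction n) (simp_all add: C_def K0 nxt)
  have Cs: "C (Suc n) \<subset> C n" for n using nxt[OF CA[of n]] by (simp add: C_def)
  obtain n where "\<forall>m\<ge>n. C m = C n"
    using art[unfolded artinian_def, rule_format, of C] CA sub Cs by blast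
  then show False using Cs[of n] by (metis le_SucI order_refl order_less_irrefl)
qed

text \<open>Take the intersection over a finite subfamily that is minimal among all such;
  adjoining any further member cannot shrink it.\<close>

lemma artinian_Inter_eq_finite_Inter:
  assumes art: "artinian R M" and ne: "F \<noteq> {}" and sub: "\<And>N. N \<in> F \<Longrightarrow> submodule R M N"
  shows "\<exists>G. finite G \<and> G \<noteq> {} \<and> G \<subseteq> F \<and> \<Inter>G = \<Inter>F"
proof -
  define B where "B = {\<Inter>G | G. finite G \<and> G \<noteq> {} \<and> G \<subseteq> F}"
  have "B \<noteq> {}" using ne unfolding B_def by blast
  moreover have "\<And>K. K \<in> B \<Longrightarrow> submodule R M K"
    unfolding B_def using submodule_Inter sub by blast
  ultimately obtain J where "J \<in> B" and Jmin: "\<forall>K\<in>B. K \<subseteq> J \<longrightarrow> K = J"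
    using artinian_has_minimal[OF art] by blast
  then obtain G where G: "J = \<Inter>G" "finite G" "G \<noteq> {}" "G \<subseteq> F" unfolding B_def by blast
  have "J \<subseteq> N" if "N \<in> F" for N
  proof -
    have "\<Inter>(insert N G) \<in> B" unfolding B_def using G that by blast
    moreover have "\<Inter>(insert N G) \<subseteq> J" using G(1) by blast
    ultimately have "\<Inter>(insert N G) = J" using Jmin by blast
    then show ?thesis by blast
  qed
  then have "\<Inter>G = \<Inter>F" using G by blast
  with G show ?thesis by blast
qed

subsection \<open>Prime and primitive \<open>M\<close>-ideals\<close>

lemma simple_mod_image_of_minimal:
  assumes M: "lmodule R M" and X: "lmodule R X" and f: "mod_hom R M X f"
    and K: "submodule R M K" and fK: "f ` K \<noteq> {\<zero>\<^bsub>X\<^esub>}"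
    and Kmin: "\<And>K'. submodule R M K' \<Longrightarrow> K' \<subseteq> K \<Longrightarrow> \<not> K' \<subseteq> Ann R M X \<Longrightarrow> K' = K"
  shows "simple_mod R (submod X (f ` K))"
  unfolding simple_mod_def
proof (intro conjI allI impI)
  have Y: "submodule R X (f ` K)" using submodule_image[OF M X f K] .
  show "lmodule R (submod X (f ` K))" using lmodule_submod[OF X Y] .
  show "carrier (submod X (f ` K)) \<noteq> {\<zero>\<^bsub>submod X (f ` K)\<^esub>}" using fK by simp
  fix N assume "submodule R (submod X (f ` K)) N"
  then have N: "submodule R X N" and NY: "N \<subseteq> f ` K"
    using submoduleD(1)[OF Y] unfolding submodule_def by auto
  define K' where "K' = K \<inter> f -` N"
  have NK': "N = f ` K'" using NY unfolding K'_def by blast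
  show "N = {\<zero>\<^bsub>submod X (f ` K)\<^esub>} \<or> N = carrier (submod X (f ` K))"
  proof (cases "K' \<subseteq> Ann R M X")
    case True
    then have "N \<subseteq> {\<zero>\<^bsub>X\<^esub>}" using NK' f by (auto simp: Ann_def)
    then show ?thesis using submoduleD(2)[OF N] by auto
  next
    case False
    then have "K' = K"
      using Kmin submodule_Int_vimage[OF M X f K N] unfolding K'_def by blast
    then show ?thesis using NK' by simp
  qed
qed

lemma prime_M_idealE:
  fixes R :: "'r ring" and M :: "('r, 'a) module"
  assumes "prime_M_ideal R M P"
  obtains X :: "('r, 'r set) module"
  where "M_ideal R M P" "P \<noteq> carrier M" "M_prime R M X" "P = Ann R M X"
  using assms unfolding prime_M_ideal_def by (elim conjE exE) simp

lemma prime_M_ideal_imp_primitive: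
  fixes R :: "'r ring" and M :: "('r, 'a) module"
  assumes M: "lmodule R M" and art: "artinian R M" and P: "prime_M_ideal R M P"
  shows "primitive_M_ideal R M P"
proof -
  obtain X :: "('r, 'r set) module" where PM: "M_ideal R M P" "P \<noteq> carrier M"
    and X: "M_prime R M X" and PX: "P = Ann R M X"
    using P by (rule prime_M_idealE)
  have lX: "lmodule R X" using M_primeD(1)[OF X] .
  have "P \<subseteq> carrier M" unfolding PX by (rule Ann_subset_carrier)
  with PM(2) have "\<not> carrier M \<subseteq> P" by blast
  define A where "A = {K. submodule R M K \<and> \<not> K \<subseteq> P}"
  have "carrier M \<in> A" using submodule_carrier[OF M] \<open>\<not> carrier M \<subseteq> P\<close> unfolding A_def by blast
  then obtain K where K: "submodule R M K" "\<not> K \<subseteq> P" and Kmin: "\<forall>K'\<in>A. K' \<subseteq> K \<longrightarrow> K' = K"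
    using artinian_has_minimal[OF art, of A] unfolding A_def by blast
  obtain f k where f: "mod_hom R M X f" and k: "k \<in> K" and fk: "f k \<noteq> \<zero>\<^bsub>X\<^esub>"
    using K submoduleD(1)[OF K(1)] PX unfolding Ann_def by blast
  have fK: "f ` K \<noteq> {\<zero>\<^bsub>X\<^esub>}" using k fk by blast
  have "simple_mod R (submod X (f ` K))"
    using simple_mod_image_of_minimal[OF M lX f K(1) fK] Kmin PX unfolding A_def by blast
  moreover have "P = Ann R M (submod X (f ` K))"
    using M_prime_Ann_submod[OF M X submodule_image[OF M lX f K(1)] fK] PX by simp
  ultimately show ?thesis
    unfolding primitive_M_ideal_def using PM(1) by blast
qed

theorem theorem5p7:
  fixes R :: "'r ring" and M :: "('r, 'a) module"
  assumes "lmodule R M"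
    and "proj_in_sigma R M"
    and "artinian R M"
  shows "prime_radical R M = carrier M \<or>
    (\<exists>Ps :: 'a set set. finite Ps \<and> Ps \<noteq> {} \<and> (\<forall>P\<in>Ps. primitive_M_ideal R M P) \<and>
       prime_radical R M = \<Inter>Ps)"
proof (cases "{P. prime_M_ideal R M P} = {}")
  case True
  then show ?thesis by (simp add: prime_radical_def)
next
  case False
  have sub: "\<And>P. P \<in> {P. prime_M_ideal R M P} \<Longrightarrow> submodule R M P"
    using submodule_Ann[OF assms(1) M_primeD(1)] by (auto elim: prime_M_idealE)
  obtain Ps where Ps: "finite Ps" "Ps \<noteq> {}" "Ps \<subseteq> {P. prime_M_ideal R M P}"
    and eq: "\<Inter>Ps = \<Inter>{P. prime_M_ideal R M P}"
    using artinian_Inter_eq_finite_Inter[OF assms(3) False sub] by blast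
  have "prime_radical R M = \<Inter>Ps"
    using eq Ps(2,3) sub submoduleD(1) unfolding prime_radical_def by blast
  moreover have "\<forall>P\<in>Ps. primitive_M_ideal R M P"
    using Ps(3) prime_M_ideal_imp_primitive[OF assms(1,3)] by blast
  ultimately show ?thesis using Ps by blast
qed

end
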